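(* It is not the case that, for every propositional formula $\pi$ and every formula $\varphi$, the formula $[\ddagger\pi]\varphi \leftrightarrow [\dagger\pi][\dagger\lnot\pi]\varphi$ is true at every world of every $\mathsf{S5}$ model (model whose relation is an equivalence relation). That is, forgetting whether $\pi$ is not equivalent to forgetting $\pi$ and then forgetting $\lnot\pi$, even over $\mathsf{S5}$ models.
   Context: Fix a countable non-empty set $\mathit{At}$ of atoms. Formulas are built from $\top$, atoms, $\lnot$, $\land$, $\Box$ and, for each propositional $\pi$, operators $[\ddagger\pi]$ ("after forgetting whether $\pi$") and $[\dagger\pi]$ ("after forgetting $\pi$"); other connectives as usual. A model is $\mathcal{M}=\langle W,R,V\rangle$, $W\neq\varnothing$, $R\subseteq W\times W$, $V:\mathit{At}\to\mathcal{P}(W)$, with standard Kripke semantics for $\Box$. A literal is an atom or its negation; a clause is a finite set $D$ of literals read as $\bigvee D$ ($\bigvee\varnothing:=\bot$), tautological if it contains $p$ and $\lnot p$ for some $p$. For propositional $\pi$, $\mathcal{C}(\pi)$ is the set of non-tautological clauses $D$ with $\models\pi\to\bigvee D$ and no $D'\subsetneq D$ with $\models\pi\to\bigvee D'$. For a model $\mathcal{M}$ and a finite family $(D_i)_{i\in I}$ of non-tautological clauses, $0\notin I$, $\mathcal{M}^{(D_i)_{i\in I}}_u=\langle W',R',V'\rangle$ has $W'=W\times(\{0\}\cup I)$, $(w,i)R'(v,j)$ iff $wRv$, $(w,0)\in V'(p)$ iff $w\in V(p)$, and for $i\in I$: $(w,i)\in V'(p)$ iff $\lnot p\in D_i$,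 or $\{p,\lnot p\}\cap D_i=\varnothing$ and $w\in V(p)$. Semantics: $\mathcal{M},w\models[\ddagger\pi]\varphi$ iff for all $D_1\in\mathcal{C}(\pi)$, $D_2\in\mathcal{C}(\lnot\pi)$, $\mathcal{M}^{(D_1,D_2)}_u,(w,0)\models\varphi$; $\mathcal{M},w\models[\dagger\pi]\varphi$ iff for all $D\in\mathcal{C}(\pi)$, $\mathcal{M}^{(D)}_u,(w,0)\models\varphi$ (family indexed by $I=\{1\}$). *)

theory Defs
  imports "HOL-Library.Countable"
begin

datatype 'a pform = PTop | PAtom 'a | PNeg "'a pform" | PAnd "'a pform" "'a pform"

text \<open>Modal formulas; FgW pi phi is [forget whether pi] phi, Fg pi phi is [forget pi] phi.\<close>
datatype 'a form =
    Top
  | Atom 'a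
  | Neg "'a form"
  | And "'a form" "'a form"
  | Box "'a form"
  | FgW "'a pform" "'a form"
  | Fg "'a pform" "'a form"

definition Or :: "'a form \<Rightarrow> 'a form \<Rightarrow> 'a form" where
  "Or a b = Neg (And (Neg a) (Neg b))"

definition Imp :: "'a form \<Rightarrow> 'a form \<Rightarrow> 'a form" where
  "Imp a b = Neg (And a (Neg b))"

definition Iff :: "'a form \<Rightarrow> 'a form \<Rightarrow> 'a form" where
  "Iff a b = And (Imp a b) (Imp b a)"

primrec peval :: "('a \<Rightarrow> bool) \<Rightarrow> 'a pform \<Rightarrow> bool" where
  "peval v PTop = True"
| "peval v (PAtom p) = v p"
| "peval v (PNeg a) = (\<not> peval v a)"
| "peval v (PAnd a b) = (peval v a \<and> peval v b)"

text \<open>A literal is (p, True) for the atom p and (p, False) for its negation.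
  A clause is a finite set of literals, read disjunctively.\<close>
type_synonym 'a clause = "('a \<times> bool) set"

definition clause_val :: "('a \<Rightarrow> bool) \<Rightarrow> 'a clause \<Rightarrow> bool" where
  "clause_val v D = (\<exists>(p, b) \<in> D. v p = b)"

definition tautological :: "'a clause \<Rightarrow> bool" where
  "tautological D = (\<exists>p. (p, True) \<in> D \<and> (p, False) \<in> D)"

definition entails_clause :: "'a pform \<Rightarrow> 'a clause \<Rightarrow> bool" where
  "entails_clause \<pi> D = (\<forall>v. peval v \<pi> \<longrightarrow> clause_val v D)"

definition Cl :: "'a pform \<Rightarrow> 'a clause set" where
  "Cl \<pi> = {D. finite D \<and> \<not> tautological D \<and> entails_clause \<pi> D
              \<and> \<not> (\<exists>D'. D' \<subset> D \<and> entails_clause \<pi> D')}"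

type_synonym ('a, 'w) model = "'w set \<times> ('w \<times> 'w) set \<times> ('a \<Rightarrow> 'w set)"

definition wf_model :: "('a, 'w) model \<Rightarrow> bool" where
  "wf_model M = (case M of (W, R, V) \<Rightarrow> W \<noteq> {} \<and> R \<subseteq> W \<times> W \<and> (\<forall>p. V p \<subseteq> W))"

definition S5_model :: "('a, 'w) model \<Rightarrow> bool" where
  "S5_model M = (wf_model M \<and> (case M of (W, R, V) \<Rightarrow> equiv W R))"

text \<open>Internally, worlds of iterated update models are encoded as pairs (w, xs):
  the original world w together with the list xs of copy indices chosen by the successive
  updates; the pair (u, i) of the paper (u a world, i an index in {0} \<union> I) is encoded
  by appending i to the index list of u.  The family (D_i)_{i \<in> I} is given as a list Ds,
  with I = {1..length Ds} and D_i = Ds ! (i - 1).\<close>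

definition lit_upd :: "'a clause \<Rightarrow> 'a \<Rightarrow> bool \<Rightarrow> bool" where
  "lit_upd D p old = ((p, False) \<in> D \<or> ((p, True) \<notin> D \<and> (p, False) \<notin> D \<and> old))"

definition upd :: "('a, 'w \<times> nat list) model \<Rightarrow> 'a clause list \<Rightarrow> ('a, 'w \<times> nat list) model" where
  "upd M Ds = (case M of (W, R, V) \<Rightarrow>
     ({(w, xs @ [i]) | w xs i. (w, xs) \<in> W \<and> i \<le> length Ds},
      {((w, xs @ [i]), (v, ys @ [j])) | w xs i v ys j.
          ((w, xs), (v, ys)) \<in> R \<and> i \<le> length Ds \<and> j \<le> length Ds},
      \<lambda>p. {(w, xs @ [i]) | w xs i. (w, xs) \<in> W \<and> i \<le> length Ds \<and>
              (if i = 0 then (w, xs) \<in> V p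
               else lit_upd (Ds ! (i - 1)) p ((w, xs) \<in> V p))}))"

definition rel_of :: "('a, 'w) model \<Rightarrow> ('w \<times> 'w) set" where
  "rel_of M = fst (snd M)"

definition val_of :: "('a, 'w) model \<Rightarrow> 'a \<Rightarrow> 'w set" where
  "val_of M = snd (snd M)"

primrec sat :: "('a, 'w \<times> nat list) model \<Rightarrow> 'w \<times> nat list \<Rightarrow> 'a form \<Rightarrow> bool" where
  "sat M w Top = True"
| "sat M w (Atom p) = (w \<in> val_of M p)"
| "sat M w (Neg \<phi>) = (\<not> sat M w \<phi>)"
| "sat M w (And \<phi> \<psi>) = (sat M w \<phi> \<and> sat M w \<psi>)"
| "sat M w (Box \<phi>) = (\<forall>v. (w, v) \<in> rel_of M \<longrightarrow> sat M v \<phi>)"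
| "sat M w (FgW \<pi> \<phi>) = (\<forall>D1 \<in> Cl \<pi>. \<forall>D2 \<in> Cl (PNeg \<pi>).
        sat (upd M [D1, D2]) (fst w, snd w @ [0]) \<phi>)"
| "sat M w (Fg \<pi> \<phi>) = (\<forall>D \<in> Cl \<pi>. sat (upd M [D]) (fst w, snd w @ [0]) \<phi>)"

definition lift :: "('a, 'w) model \<Rightarrow> ('a, 'w \<times> nat list) model" where
  "lift M = (case M of (W, R, V) \<Rightarrow>
     ({(w, []) | w. w \<in> W}, {((w, []), (v, [])) | w v. (w, v) \<in> R},
      \<lambda>p. {(w, []) | w. w \<in> V p}))"

definition holds :: "('a, 'w) model \<Rightarrow> 'w \<Rightarrow> 'a form \<Rightarrow> bool" where
  "holds M w \<phi> = sat (lift M) (w, []) \<phi>"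

end

theory Submission
  imports Defs
begin

text \<open>Take \<pi> = p \<or> q for distinct atoms p, q, and \<phi> = \<box>(p \<rightarrow> q) on the one-world
  reflexive model where every atom is true.  The only prime implicate of \<pi> is p \<or> q, those of
  \<not>\<pi> are \<not>p and \<not>q.  Forgetting whether \<pi> creates, besides the original copy, one copy
  where p and q are both false and one where one of them is made true while the other stays
  true, so p \<rightarrow> q holds throughout the cluster.  Forgetting \<pi> and then \<not>\<pi> (with the
  implicate \<not>p) instead creates a copy where p is made true after q was made false,
  refuting \<box>(p \<rightarrow> q).\<close>

abbreviation POr :: "'a pform \<Rightarrow> 'a pform \<Rightarrow> 'a pform" where
  "POr a b \<equiv> PNeg (PAnd (PNeg a) (PNeg b))"

lemma not_clause_val_refuter:
  assumes "\<not> tautological D"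
  shows "\<not> clause_val (\<lambda>x. (x, False) \<in> D) D"
proof
  assume "clause_val (\<lambda>x. (x, False) \<in> D) D"
  then obtain x b where "(x, b) \<in> D" and "((x, False) \<in> D) = b"
    unfolding clause_val_def by auto
  with assms show False
    unfolding tautological_def by (cases b) auto
qed

lemma literal_in_implicate:
  assumes "\<not> tautological D" and "entails_clause \<pi> D"
    and "peval ((\<lambda>x. (x, False) \<in> D)(p := b)) \<pi>"
  shows "(p, b) \<in> D"
proof -
  let ?v = "\<lambda>x. (x, False) \<in> D"
  obtain x c where "(x, c) \<in> D" and "(?v(p := b)) x = c"
    using assms(2,3) unfolding entails_clause_def clause_val_def by blast
  moreover have "?v x \<noteq> c"
    using \<open>(x, c) \<in> D\<close> not_clause_val_refuter[OF assms(1)] unfolding clause_val_def by blast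
  ultimately show ?thesis by (cases "x = p") auto
qed

lemma Cl_minimal:
  assumes "D \<in> Cl \<pi>" and "E \<subseteq> D" and "entails_clause \<pi> E"
  shows "D = E"
  using assms unfolding Cl_def by blast

lemma singleton_in_Cl:
  assumes "entails_clause \<pi> {l}" and "\<not> entails_clause \<pi> {}"
  shows "{l} \<in> Cl \<pi>"
proof -
  have "\<not> tautological {l}"
    unfolding tautological_def by auto
  moreover have "\<not> (\<exists>D'. D' \<subset> {l} \<and> entails_clause \<pi> D')"
    using assms(2) by (auto simp: subset_singleton_iff)
  ultimately show ?thesis
    using assms(1) unfolding Cl_def by simp
qed

lemma Cl_cong:
  assumes "\<And>v. peval v \<pi> = peval v \<pi>'"
  shows "Cl \<pi> = Cl \<pi>'"
  using assms unfolding Cl_def entails_clause_def by simp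

lemma Cl_disj_atoms:
  assumes "p \<noteq> q"
  shows "Cl (POr (PAtom p) (PAtom q)) = {{(p, True), (q, True)}}"
    (is "Cl ?\<pi> = {?E}")
proof
  have entails_E: "entails_clause ?\<pi> ?E"
    unfolding entails_clause_def clause_val_def by auto
  show "Cl ?\<pi> \<subseteq> {?E}"
  proof
    fix D assume D: "D \<in> Cl ?\<pi>"
    then have "\<not> tautological D" and "entails_clause ?\<pi> D"
      unfolding Cl_def by auto
    then have "(p, True) \<in> D" and "(q, True) \<in> D"
      using literal_in_implicate[of D ?\<pi> p True] literal_in_implicate[of D ?\<pi> q True]
      by simp_all
    then show "D \<in> {?E}"
      using Cl_minimal[OF D _ entails_E] by simp
  qed
  have proper_subset_fails: "\<not> entails_clause ?\<pi> D'" if "D' \<subset> ?E" for D'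
  proof -
    have "(q, True) \<notin> D' \<or> (p, True) \<notin> D'"
      using that by auto
    then obtain r where r: "r = p \<or> r = q" and "(r, True) \<notin> D'"
      by blast
    then have "\<not> clause_val (\<lambda>x. x = r) D'"
      using that assms unfolding clause_val_def by auto
    moreover have "peval (\<lambda>x. x = r) ?\<pi>"
      using r by auto
    ultimately show ?thesis
      unfolding entails_clause_def by blast
  qed
  have "finite ?E" and "\<not> tautological ?E"
    using assms unfolding tautological_def by auto
  then show "{?E} \<subseteq> Cl ?\<pi>"
    using entails_E proper_subset_fails unfolding Cl_def by blast
qed

lemma Cl_conj_neg_atoms:
  "Cl (PAnd (PNeg (PAtom p)) (PNeg (PAtom q))) = {{(p, False)}, {(q, False)}}"
    (is "Cl ?\<pi> = _")
proof
  have entails_p: "entails_clause ?\<pi> {(p, False)}"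
    and entails_q: "entails_clause ?\<pi> {(q, False)}"
    unfolding entails_clause_def clause_val_def by auto
  show "Cl ?\<pi> \<subseteq> {{(p, False)}, {(q, False)}}"
  proof
    fix D assume D: "D \<in> Cl ?\<pi>"
    then have "\<not> tautological D" and "entails_clause ?\<pi> D"
      unfolding Cl_def by auto
    then have "\<not> peval (\<lambda>x. (x, False) \<in> D) ?\<pi>"
      using not_clause_val_refuter unfolding entails_clause_def by blast
    then have "(p, False) \<in> D \<or> (q, False) \<in> D"
      by simp
    then show "D \<in> {{(p, False)}, {(q, False)}}"
      using Cl_minimal[OF D _ entails_p] Cl_minimal[OF D _ entails_q] by blast
  qed
  have "peval (\<lambda>_. False) ?\<pi>"
    by simp
  then have "\<not> entails_clause ?\<pi> {}"
    unfolding entails_clause_def clause_val_def by blast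
  then show "{{(p, False)}, {(q, False)}} \<subseteq> Cl ?\<pi>"
    using singleton_in_Cl entails_p entails_q by blast
qed

lemma Cl_neg_disj_atoms:
  "Cl (PNeg (POr (PAtom p) (PAtom q))) = {{(p, False)}, {(q, False)}}"
proof -
  have "Cl (PNeg (POr (PAtom p) (PAtom q))) = Cl (PAnd (PNeg (PAtom p)) (PNeg (PAtom q)))"
    by (rule Cl_cong) simp
  then show ?thesis
    by (simp only: Cl_conj_neg_atoms)
qed

lemma fst_upd:
  "(w, xs @ [i]) \<in> fst (upd M Ds) \<longleftrightarrow> (w, xs) \<in> fst M \<and> i \<le> length Ds"
  by (cases M) (simp add: upd_def)

lemma rel_of_upd:
  "rel_of (upd M Ds) = {((w, xs @ [i]), (v, ys @ [j])) | w xs i v ys j.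
     ((w, xs), (v, ys)) \<in> rel_of M \<and> i \<le> length Ds \<and> j \<le> length Ds}"
  by (cases M) (simp add: upd_def rel_of_def)

lemma val_of_upd:
  "(w, xs @ [i]) \<in> val_of (upd M Ds) p \<longleftrightarrow> (w, xs) \<in> fst M \<and> i \<le> length Ds \<and>
     (if i = 0 then (w, xs) \<in> val_of M p
      else lit_upd (Ds ! (i - 1)) p ((w, xs) \<in> val_of M p))"
  by (cases M) (simp add: upd_def val_of_def)

lemma holds_Iff: "holds M w (Iff \<phi> \<psi>) \<longleftrightarrow> (holds M w \<phi> \<longleftrightarrow> holds M w \<psi>)"
  unfolding holds_def Iff_def Imp_def by auto

definition single_world_model :: "'w \<Rightarrow> ('a, 'w) model" where
  "single_world_model w = ({w}, {(w, w)}, \<lambda>_. {w})"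

lemma S5_single_world_model: "S5_model (single_world_model w)"
  unfolding single_world_model_def S5_model_def wf_model_def equiv_def refl_on_def sym_def trans_def
  by auto

lemma lift_single_world_model:
  "fst (lift (single_world_model w)) = {(w, [])}"
  "rel_of (lift (single_world_model w)) = {((w, []), (w, []))}"
  "val_of (lift (single_world_model w)) p = {(w, [])}"
  unfolding single_world_model_def lift_def rel_of_def val_of_def by auto

lemma holds_forget_whether_disj:
  assumes "p \<noteq> q"
  shows "holds (single_world_model w) w
           (FgW (POr (PAtom p) (PAtom q)) (Box (Imp (Atom p) (Atom q))))"
proof -
  let ?L = "lift (single_world_model w)"
  let ?E = "{(p, True), (q, True)}"
  have "sat (upd ?L [?E, F]) (w, [0]) (Box (Imp (Atom p) (Atom q)))"
    if F: "F \<in> {{(p, False)}, {(q, False)}}" for F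
  proof (simp add: Imp_def, intro allI impI)
    fix v
    assume "((w, [0]), v) \<in> rel_of (upd ?L [?E, F])"
      and p_true: "v \<in> val_of (upd ?L [?E, F]) p"
    then obtain j where v: "v = (w, [j])" and "j \<le> 2"
      by (auto simp: rel_of_upd lift_single_world_model)
    then have "j = 0 \<or> j = 1 \<or> j = 2" by auto
    then show "v \<in> val_of (upd ?L [?E, F]) q"
      using v p_true F assms val_of_upd[of w "[]" _ ?L "[?E, F]"]
      by (auto simp: lift_single_world_model lit_upd_def)
  qed
  then show ?thesis
    using Cl_disj_atoms[OF assms] by (simp add: holds_def Cl_neg_disj_atoms)
qed

lemma not_holds_forget_disj_twice:
  assumes "p \<noteq> q"
  shows "\<not> holds (single_world_model w) w
           (Fg (POr (PAtom p) (PAtom q)) (Fg (PNeg (POr (PAtom p) (PAtom q)))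
              (Box (Imp (Atom p) (Atom q)))))"
proof -
  let ?L = "lift (single_world_model w)"
  let ?N1 = "upd ?L [{(p, True), (q, True)}]"
  let ?N = "upd ?N1 [{(p, False)}]"
  have "((w, [0]), (w, [1])) \<in> rel_of ?N1"
    by (fastforce simp: rel_of_upd lift_single_world_model)
  then have "((w, [0] @ [0]), (w, [1] @ [1])) \<in> rel_of ?N"
    unfolding rel_of_upd[of ?N1] by fastforce
  then have rel: "((w, [0, 0]), (w, [1, 1])) \<in> rel_of ?N"
    by simp
  have "(w, [1]) \<in> fst ?N1" and "(w, [1]) \<notin> val_of ?N1 q"
    using fst_upd[of w "[]" 1 "lift (single_world_model w)" "[{(p, True), (q, True)}]"]
      val_of_upd[of w "[]" 1 "lift (single_world_model w)" "[{(p, True), (q, True)}]"]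
    by (simp_all add: lift_single_world_model lit_upd_def)
  then have "(w, [1] @ [1]) \<in> val_of ?N p" and "(w, [1] @ [1]) \<notin> val_of ?N q"
    using assms unfolding val_of_upd by (simp_all add: lit_upd_def)
  then have "\<not> sat ?N (w, [0, 0]) (Box (Imp (Atom p) (Atom q)))"
    using rel by (auto simp: Imp_def)
  then show ?thesis
    by (simp add: holds_def Cl_disj_atoms[OF assms] Cl_neg_disj_atoms)
qed

theorem proposition2:
  fixes dummy :: "'a::countable"
  assumes "\<exists>p q :: 'a. p \<noteq> q"
  shows "\<not> (\<forall>(\<pi> :: 'a pform) (\<phi> :: 'a form) (M :: ('a, 'w) model) w.
             S5_model M \<and> w \<in> fst M \<longrightarrow>
             holds M w (Iff (FgW \<pi> \<phi>) (Fg \<pi> (Fg (PNeg \<pi>) \<phi>))))"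
proof
  obtain p q :: 'a where "p \<noteq> q" using assms by blast
  obtain w :: 'w where True by simp
  let ?\<pi> = "POr (PAtom p) (PAtom q)" and ?\<phi> = "Box (Imp (Atom p) (Atom q))"
  assume equivalence: "\<forall>(\<pi> :: 'a pform) (\<phi> :: 'a form) (M :: ('a, 'w) model) w.
            S5_model M \<and> w \<in> fst M \<longrightarrow> holds M w (Iff (FgW \<pi> \<phi>) (Fg \<pi> (Fg (PNeg \<pi>) \<phi>)))"
  have "holds (single_world_model w) w (Iff (FgW ?\<pi> ?\<phi>) (Fg ?\<pi> (Fg (PNeg ?\<pi>) ?\<phi>)))"
    by (rule equivalence[rule_format])
      (simp add: S5_single_world_model, simp add: single_world_model_def)
  then show False
    using holds_forget_whether_disj[OF \<open>p \<noteq> q\<close>, of w]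
      not_holds_forget_disj_twice[OF \<open>p \<noteq> q\<close>, of w]
    by (simp add: holds_Iff)
qed

end
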